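(* Let $V$ be an $n$-dimensional vector space over a field $\mathbb{F}$ with an alternating bilinear form $\mathsf{s}$ of maximal rank. Then the pre-geometry $\Gamma(V)$ is transversal and has a string diagram (with respect to the natural ordering of the type set $I=\{1,\dots,n-1\}$).
   Context: $\mathrm{Rad}(U)=U\cap U^\perp$ with respect to $\mathsf{s}$; maximal rank means $\dim\mathrm{Rad}(V)\le1$. $\Gamma(V)$: for $i\in I$ the objects of type $i$ are the $i$-dimensional subspaces $U$ with $U\cap\mathrm{Rad}(V)=0$ and $\dim\mathrm{Rad}(U)\le1$; $X,Y$ are incident iff $X=Y$, or $X\subseteq Y$ with $X\cap\mathrm{Rad}(Y)=0$, or vice versa. A flag is a set of pairwise incident objects, a chamber is a flag containing an object of every type. Transversal: every flag is contained in a chamber. Has a string diagram (w.r.t. a total order on $I$): whenever $i<j<k$ and $X,Y,Z$ are objects of types $i,j,k$ with $X$ and $Z$ both incident to $Y$, then $X$ is incident to $Z$. *)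

theory Defs
  imports Complex_Main
begin

definition alt_bilinear :: "('a::field \<Rightarrow> 'v::ab_group_add \<Rightarrow> 'v) \<Rightarrow> ('v \<Rightarrow> 'v \<Rightarrow> 'a) \<Rightarrow> bool" where
  "alt_bilinear scale s \<longleftrightarrow>
     (\<forall>u v w. s (u + v) w = s u w + s v w) \<and>
     (\<forall>c u w. s (scale c u) w = c * s u w) \<and>
     (\<forall>u v w. s u (v + w) = s u v + s u w) \<and>
     (\<forall>c u w. s u (scale c w) = c * s u w) \<and>
     (\<forall>v. s v v = 0)"

definition Rad :: "('v \<Rightarrow> 'v \<Rightarrow> 'a::zero) \<Rightarrow> 'v set \<Rightarrow> 'v set" where
  "Rad s U = U \<inter> {v. \<forall>u\<in>U. s u v = 0}"

definition types :: "('a::field \<Rightarrow> 'v::ab_group_add \<Rightarrow> 'v) \<Rightarrow> nat set" where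
  "types scale = {1 .. Vector_Spaces.vector_space.dim scale (UNIV::'v set) - 1}"

definition gobj :: "('a::field \<Rightarrow> 'v::ab_group_add \<Rightarrow> 'v) \<Rightarrow> ('v \<Rightarrow> 'v \<Rightarrow> 'a) \<Rightarrow> 'v set \<Rightarrow> bool" where
  "gobj scale s U \<longleftrightarrow> Modules.module.subspace scale U \<and>
     Vector_Spaces.vector_space.dim scale U \<in> types scale \<and>
     U \<inter> Rad s UNIV = {0} \<and>
     Vector_Spaces.vector_space.dim scale (Rad s U) \<le> 1"

definition gtype :: "('a::field \<Rightarrow> 'v::ab_group_add \<Rightarrow> 'v) \<Rightarrow> 'v set \<Rightarrow> nat" where
  "gtype scale U = Vector_Spaces.vector_space.dim scale U"

definition incident :: "('v::zero \<Rightarrow> 'v \<Rightarrow> 'a::zero) \<Rightarrow> 'v set \<Rightarrow> 'v set \<Rightarrow> bool" where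
  "incident s X Y \<longleftrightarrow> X = Y \<or> (X \<subseteq> Y \<and> X \<inter> Rad s Y = {0}) \<or> (Y \<subseteq> X \<and> Y \<inter> Rad s X = {0})"

definition is_flag :: "('a::field \<Rightarrow> 'v::ab_group_add \<Rightarrow> 'v) \<Rightarrow> ('v \<Rightarrow> 'v \<Rightarrow> 'a) \<Rightarrow> 'v set set \<Rightarrow> bool" where
  "is_flag scale s F \<longleftrightarrow> (\<forall>X\<in>F. gobj scale s X) \<and> (\<forall>X\<in>F. \<forall>Y\<in>F. incident s X Y)"

definition is_chamber :: "('a::field \<Rightarrow> 'v::ab_group_add \<Rightarrow> 'v) \<Rightarrow> ('v \<Rightarrow> 'v \<Rightarrow> 'a) \<Rightarrow> 'v set set \<Rightarrow> bool" where
  "is_chamber scale s C \<longleftrightarrow> is_flag scale s C \<and> (\<forall>i\<in>types scale. \<exists>X\<in>C. gtype scale X = i)"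

definition transversal :: "('a::field \<Rightarrow> 'v::ab_group_add \<Rightarrow> 'v) \<Rightarrow> ('v \<Rightarrow> 'v \<Rightarrow> 'a) \<Rightarrow> bool" where
  "transversal scale s \<longleftrightarrow> (\<forall>F. is_flag scale s F \<longrightarrow> (\<exists>C. is_chamber scale s C \<and> F \<subseteq> C))"

definition string_diagram :: "('a::field \<Rightarrow> 'v::ab_group_add \<Rightarrow> 'v) \<Rightarrow> ('v \<Rightarrow> 'v \<Rightarrow> 'a) \<Rightarrow> bool" where
  "string_diagram scale s \<longleftrightarrow>
     (\<forall>X Y Z. gobj scale s X \<and> gobj scale s Y \<and> gobj scale s Z \<and>
        gtype scale X < gtype scale Y \<and> gtype scale Y < gtype scale Z \<and>
        incident s X Y \<and> incident s Z Y \<longrightarrow> incident s X Z)"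

end

theory Submission
  imports Defs
begin

text \<open>
  Between objects of different types, incidence is the relation X \<subseteq> Y with X \<inter> Rad Y = 0
  (from the smaller to the larger), and this relation is transitive: that is the string diagram.
  For transversality, a flag missing type i has neighbours A and B with dim A < i < dim B
  (the subspaces 0 and V serving as sentinels), and one climbs from A towards B one dimension at
  a time. Adjoin to A a vector v of B lying neither in A + Rad B nor, if Rad A is a line, in its
  orthogonal; such v exists because B is not the union of two proper subspaces. Then A + <v> meets
  Rad B trivially, A meets Rad(A + <v>) trivially, and the latter therefore has dimension at most 1.
\<close>

definition incident_below :: "('v::zero \<Rightarrow> 'v \<Rightarrow> 'a::zero) \<Rightarrow> 'v set \<Rightarrow> 'v set \<Rightarrow> bool" where
  "incident_below s X Y \<longleftrightarrow> X \<subseteq> Y \<and> X \<inter> Rad s Y = {0}"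

lemma incident_iff:
  "incident s X Y \<longleftrightarrow> X = Y \<or> incident_below s X Y \<or> incident_below s Y X"
  unfolding incident_def incident_below_def ..

lemma Rad_subset: "Rad s U \<subseteq> U"
  unfolding Rad_def by blast

lemma Int_Rad_subset_Rad: "X \<subseteq> Y \<Longrightarrow> X \<inter> Rad s Y \<subseteq> Rad s X"
  unfolding Rad_def by blast

context module
begin

lemma subspace_subset_Un_subspaces:
  assumes "subspace B" "subspace P" "subspace Q" "B \<subseteq> P \<union> Q"
  shows "B \<subseteq> P \<or> B \<subseteq> Q"
proof (rule ccontr)
  assume "\<not> (B \<subseteq> P \<or> B \<subseteq> Q)"
  then obtain p q where p: "p \<in> B" "p \<notin> P" and q: "q \<in> B" "q \<notin> Q" by blast
  then have "p \<in> Q" "q \<in> P" using assms(4) by blast+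
  have "p + q \<in> B" using p q assms(1) subspace_add by blast
  moreover have "p + q \<notin> P"
  proof
    assume "p + q \<in> P"
    then have "(p + q) - q \<in> P" using \<open>q \<in> P\<close> assms(2) subspace_diff by blast
    then show False using p by simp
  qed
  moreover have "p + q \<notin> Q"
  proof
    assume "p + q \<in> Q"
    then have "(p + q) - p \<in> Q" using \<open>p \<in> Q\<close> assms(3) subspace_diff by blast
    then show False using q by simp
  qed
  ultimately show False using assms(4) by blast
qed

end

context vector_space
begin

lemma span_insert_Int_subset:
  assumes "subspace A" "v \<notin> span (A \<union> R)"
  shows "span (insert v A) \<inter> R \<subseteq> A"
proof
  fix x assume x: "x \<in> span (insert v A) \<inter> R"
  have "span A = A" using assms(1) by simp
  with x obtain k where a: "x - k *s v \<in> A" unfolding span_insert by auto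
  have "x \<in> span (A \<union> R)" "x - k *s v \<in> span (A \<union> R)"
    using x a by (blast intro: span_base)+
  then have "x - (x - k *s v) \<in> span (A \<union> R)" by (rule span_diff)
  then have kv: "k *s v \<in> span (A \<union> R)" by simp
  have "k = 0"
  proof (rule ccontr)
    assume "k \<noteq> 0"
    then have "v = inverse k *s (k *s v)" by simp
    then show False using kv assms(2) span_scale by metis
  qed
  then show "x \<in> A" using a by simp
qed

end

context finite_dimensional_vector_space
begin

lemma dim_Un_le: "dim (S \<union> T) \<le> dim S + dim T"
proof -
  have "dim (S \<union> T) = dim (span (S \<union> T))" by simp
  also have "\<dots> = dim {x + y |x y. x \<in> span S \<and> y \<in> span T}" unfolding span_Un ..
  also have "\<dots> \<le> dim (span S) + dim (span T)"
    using dim_sums_Int[of "span S" "span T"] by simp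
  finally show ?thesis by simp
qed

lemma dim_add_le_of_Int_zero:
  assumes "subspace X" "subspace Y" "subspace C" "X \<subseteq> C" "Y \<subseteq> C" "X \<inter> Y = {0}"
  shows "dim X + dim Y \<le> dim C"
proof -
  have "{x + y |x y. x \<in> X \<and> y \<in> Y} \<subseteq> C"
    using assms(3-5) subspace_add by blast
  then have "dim {x + y |x y. x \<in> X \<and> y \<in> Y} \<le> dim C" by (rule dim_subset)
  moreover have "dim (X \<inter> Y) = 0" using assms(6) by simp
  ultimately show ?thesis using dim_sums_Int[OF assms(1,2)] by linarith
qed

lemma subspace_eq_span_singleton:
  assumes "subspace U" "dim U \<le> 1" "r \<in> U" "r \<noteq> 0"
  shows "U = span {r}"
proof -
  have "span {r} \<subseteq> U" using assms(1,3) span_minimal by blast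
  moreover have "dim U \<le> dim (span {r})" using assms(2,4) by simp
  ultimately show ?thesis using assms(1) subspace_dim_equal by blast
qed

end

locale bilinear_form_space = finite_dimensional_vector_space scale Basis
  for scale :: "'a::field \<Rightarrow> 'v::ab_group_add \<Rightarrow> 'v" (infixr \<open>*s\<close> 75)
    and Basis :: "'v set" +
  fixes s :: "'v \<Rightarrow> 'v \<Rightarrow> 'a"
  assumes alt_bilinear: "alt_bilinear scale s"
begin

lemma form_add_left: "s (u + v) w = s u w + s v w"
  and form_scale_left: "s (c *s u) w = c * s u w"
  and form_add_right: "s u (v + w) = s u v + s u w"
  and form_scale_right: "s u (c *s w) = c * s u w"
  using alt_bilinear unfolding alt_bilinear_def by blast+

lemma form_zero_left: "s 0 w = 0"
  using form_scale_left[of 0] by simp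

lemma form_zero_right: "s u 0 = 0"
  using form_scale_right[of _ 0] by simp

lemma subspace_Rad: "subspace U \<Longrightarrow> subspace (Rad s U)"
  unfolding Rad_def subspace_def
  by (simp add: form_zero_right form_add_right form_scale_right)

lemma subspace_orthogonal_left: "subspace {v. s v r = 0}"
  unfolding subspace_def by (simp add: form_zero_left form_add_left form_scale_left)

lemma zero_in_Rad: "0 \<in> U \<Longrightarrow> 0 \<in> Rad s U"
  unfolding Rad_def by (simp add: form_zero_right)

lemma incident_below_trans:
  assumes "subspace X" "incident_below s X Y" "incident_below s Y Z"
  shows "incident_below s X Z"
proof -
  have "X \<subseteq> Y" "Y \<subseteq> Z" "Y \<inter> Rad s Z = {0}"
    using assms(2,3) unfolding incident_below_def by auto
  moreover have "0 \<in> X" using assms(1) subspace_0 by blast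
  ultimately show ?thesis using zero_in_Rad[of Z] unfolding incident_below_def by blast
qed

lemma incident_below_Int_Rad_UNIV:
  assumes "subspace X" "incident_below s X Y"
  shows "X \<inter> Rad s UNIV = {0}"
proof -
  have "X \<inter> Rad s UNIV \<subseteq> X \<inter> Rad s Y"
    using assms(2) Int_Rad_subset_Rad[of Y UNIV s] unfolding incident_below_def by blast
  then show ?thesis
    using assms(2) subspace_0[OF assms(1)] zero_in_Rad[of UNIV] unfolding incident_below_def by blast
qed

lemma incident_below_of_incident:
  assumes "subspace X" "subspace Y" "incident s X Y" "dim X \<le> dim Y"
  shows "X = Y \<or> incident_below s X Y"
proof -
  have "Y = X" if "Y \<subseteq> X" using subspace_dim_equal[OF assms(2,1) that assms(4)] .
  then show ?thesis using assms(3) unfolding incident_iff incident_below_def by blast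
qed

lemma exists_vector_extending_incident_below:
  assumes "subspace A" "subspace B" "incident_below s A B"
    and "dim (Rad s A) \<le> 1" "dim (Rad s B) \<le> 1" "dim A + 1 < dim B"
  obtains v where "v \<in> B" "v \<notin> span (A \<union> Rad s B)" "\<And>x. x \<in> Rad s A \<Longrightarrow> s v x = 0 \<Longrightarrow> x = 0"
proof -
  let ?P = "span (A \<union> Rad s B)"
  have "dim ?P \<le> dim A + 1" using dim_Un_le[of A "Rad s B"] assms(5) by simp
  then have not_in_P: "\<not> B \<subseteq> ?P" using assms(6) dim_subset[of B ?P] by linarith
  show thesis
  proof (cases "Rad s A \<subseteq> {0}")
    case True
    then show ?thesis using not_in_P that by blast
  next
    case False
    then obtain r where r: "r \<in> Rad s A" "r \<noteq> 0" by blast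
    then have "r \<in> A" unfolding Rad_def by blast
    then have "r \<in> B" "r \<notin> Rad s B" using assms(3) r(2) unfolding incident_below_def by blast+
    then have "\<exists>u\<in>B. s u r \<noteq> 0" unfolding Rad_def by blast
    then have "\<not> B \<subseteq> {v. s v r = 0}" by blast
    then have "\<not> B \<subseteq> ?P \<union> {v. s v r = 0}"
      using subspace_subset_Un_subspaces[OF assms(2) subspace_span subspace_orthogonal_left]
        not_in_P by blast
    then obtain v where v: "v \<in> B" "v \<notin> ?P" "s v r \<noteq> 0" by blast
    have Rad_A: "Rad s A = span {r}"
      using subspace_eq_span_singleton[OF subspace_Rad[OF assms(1)] assms(4) r] .
    have "x = 0" if x: "x \<in> Rad s A" and vx: "s v x = 0" for x
    proof -
      obtain k where "x = k *s r" using x by (auto simp: Rad_A span_singleton)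
      then have "k * s v r = 0" using vx form_scale_right by simp
      then show ?thesis using \<open>x = k *s r\<close> v(3) by simp
    qed
    then show ?thesis using that v by blast
  qed
qed

lemma incident_below_adjoin:
  assumes "subspace A" "subspace B" "incident_below s A B"
    and v: "v \<in> B" "v \<notin> span (A \<union> Rad s B)"
    and v_Rad: "\<And>x. x \<in> Rad s A \<Longrightarrow> s v x = 0 \<Longrightarrow> x = 0"
  defines "C \<equiv> span (insert v A)"
  shows "dim C = dim A + 1" "incident_below s A C" "incident_below s C B" "dim (Rad s C) \<le> 1"
proof -
  have AC: "A \<subseteq> C" and vC: "v \<in> C" unfolding C_def using span_superset by blast+
  have "A \<subseteq> B" using assms(3) unfolding incident_below_def by blast
  then have CB: "C \<subseteq> B" unfolding C_def using v(1) assms(2) by (intro span_minimal) auto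
  have "v \<notin> span A" using v(2) span_mono[of A "A \<union> Rad s B"] by blast
  then show dim_C: "dim C = dim A + 1" unfolding C_def dim_span dim_insert by simp
  have "C \<inter> Rad s B \<subseteq> A \<inter> Rad s B"
    using span_insert_Int_subset[OF assms(1) v(2)] unfolding C_def by blast
  then show "incident_below s C B"
    using CB assms(3) subspace_0[OF assms(1)] zero_in_Rad[of B] AC unfolding incident_below_def
    by blast
  have "A \<inter> Rad s C \<subseteq> {0}"
  proof
    fix x assume x: "x \<in> A \<inter> Rad s C"
    then have "x \<in> Rad s A" using Int_Rad_subset_Rad[OF AC] by blast
    moreover have "s v x = 0" using x vC unfolding Rad_def by blast
    ultimately show "x \<in> {0}" using v_Rad by blast
  qed
  then have A_Rad_C: "A \<inter> Rad s C = {0}"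
    using subspace_0[OF assms(1)] zero_in_Rad[of C] AC by blast
  then show "incident_below s A C" using AC unfolding incident_below_def by blast
  have "dim A + dim (Rad s C) \<le> dim C"
    using dim_add_le_of_Int_zero[OF assms(1) subspace_Rad _ AC Rad_subset A_Rad_C]
    unfolding C_def by simp
  then show "dim (Rad s C) \<le> 1" using dim_C by linarith
qed

lemma exists_incident_successor:
  assumes "subspace A" "subspace B" "incident_below s A B"
    and "dim (Rad s A) \<le> 1" "dim (Rad s B) \<le> 1" "dim A + 1 < dim B"
  obtains C where "subspace C" "dim C = dim A + 1" "incident_below s A C" "incident_below s C B"
    "dim (Rad s C) \<le> 1"
proof -
  obtain v where "v \<in> B" "v \<notin> span (A \<union> Rad s B)" "\<And>x. x \<in> Rad s A \<Longrightarrow> s v x = 0 \<Longrightarrow> x = 0"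
    using exists_vector_extending_incident_below[OF assms] by blast
  from incident_below_adjoin[OF assms(1-3) this] show thesis
    using that subspace_span by blast
qed

lemma exists_incident_between:
  assumes "subspace A" "subspace B" "incident_below s A B"
    and "dim (Rad s A) \<le> 1" "dim (Rad s B) \<le> 1" "dim A < k" "k < dim B"
  shows "\<exists>C. subspace C \<and> dim C = k \<and> incident_below s A C \<and> incident_below s C B \<and>
    dim (Rad s C) \<le> 1"
  using assms(6,7)
proof (induction k)
  case 0
  then show ?case by simp
next
  case (Suc k)
  show ?case
  proof (cases "k = dim A")
    case True
    with Suc.prems have "dim A + 1 < dim B" by simp
    from exists_incident_successor[OF assms(1-5) this] show ?thesis
      using True by (metis Suc_eq_plus1)
  next
    case False
    with Suc obtain C where C: "subspace C" "dim C = k" "incident_below s A C"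
      "incident_below s C B" "dim (Rad s C) \<le> 1" by auto
    have "dim C + 1 < dim B" using C(2) Suc.prems by simp
    then obtain C' where C': "subspace C'" "dim C' = Suc k" "incident_below s C C'"
      "incident_below s C' B" "dim (Rad s C') \<le> 1"
      using exists_incident_successor[OF C(1) assms(2) C(4,5) assms(5)] C(2) by auto
    moreover have "incident_below s A C'" using incident_below_trans[OF assms(1) C(3) C'(3)] .
    ultimately show ?thesis by blast
  qed
qed

lemma incident_family_greatest_below:
  assumes sub: "\<And>X. X \<in> G \<Longrightarrow> subspace X"
    and inc: "\<And>X Y. X \<in> G \<Longrightarrow> Y \<in> G \<Longrightarrow> incident s X Y"
    and "X\<^sub>0 \<in> G" "dim X\<^sub>0 < i"
  obtains A where "A \<in> G" "dim A < i" "\<And>X. X \<in> G \<Longrightarrow> dim X < i \<Longrightarrow> X = A \<or> incident_below s X A"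
proof -
  obtain A where A: "A \<in> G" "dim A < i"
    and greatest: "\<And>X. X \<in> G \<Longrightarrow> dim X < i \<Longrightarrow> dim X \<le> dim A"
    using ex_has_greatest_nat[of "\<lambda>X. X \<in> G \<and> dim X < i" X\<^sub>0 dim i] assms(3,4) by blast
  show thesis
  proof (rule that[OF A])
    fix X assume X: "X \<in> G" "dim X < i"
    show "X = A \<or> incident_below s X A"
      using incident_below_of_incident[OF sub[OF X(1)] sub[OF A(1)] inc[OF X(1) A(1)] greatest[OF X]] .
  qed
qed

lemma incident_family_least_above:
  assumes sub: "\<And>X. X \<in> G \<Longrightarrow> subspace X"
    and inc: "\<And>X Y. X \<in> G \<Longrightarrow> Y \<in> G \<Longrightarrow> incident s X Y"
    and "X\<^sub>0 \<in> G" "i < dim X\<^sub>0"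
  obtains B where "B \<in> G" "i < dim B" "\<And>X. X \<in> G \<Longrightarrow> i < dim X \<Longrightarrow> B = X \<or> incident_below s B X"
proof -
  obtain B where B: "B \<in> G" "i < dim B"
    and least: "\<And>X. X \<in> G \<Longrightarrow> i < dim X \<Longrightarrow> dim B \<le> dim X"
    using ex_has_least_nat[of "\<lambda>X. X \<in> G \<and> i < dim X" X\<^sub>0 dim] assms(3,4) by blast
  show thesis
  proof (rule that[OF B])
    fix X assume X: "X \<in> G" "i < dim X"
    show "B = X \<or> incident_below s B X"
      using incident_below_of_incident[OF sub[OF B(1)] sub[OF X(1)] inc[OF B(1) X(1)] least[OF X]] .
  qed
qed

lemma flag_with_zero_and_UNIV:
  assumes "dim (Rad s UNIV) \<le> 1" "is_flag scale s F"
  defines "G \<equiv> insert {0} (insert UNIV F)"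
  shows "\<And>X. X \<in> G \<Longrightarrow> subspace X"
    and "\<And>X. X \<in> G \<Longrightarrow> dim (Rad s X) \<le> 1"
    and "\<And>X Y. X \<in> G \<Longrightarrow> Y \<in> G \<Longrightarrow> incident s X Y"
proof -
  have obj: "\<And>X. X \<in> F \<Longrightarrow> gobj scale s X"
    and inc: "\<And>X Y. X \<in> F \<Longrightarrow> Y \<in> F \<Longrightarrow> incident s X Y"
    using assms(2) unfolding is_flag_def by auto
  show sub: "\<And>X. X \<in> G \<Longrightarrow> subspace X" using obj unfolding G_def gobj_def by auto
  have "dim (Rad s {0}) = 0" using Rad_subset[of s "{0}"] by simp
  then have "dim (Rad s {0}) \<le> 1" by linarith
  then show "\<And>X. X \<in> G \<Longrightarrow> dim (Rad s X) \<le> 1"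
    using assms(1) obj unfolding G_def gobj_def by blast
  have zero_below: "incident_below s {0} X" if "X \<in> G" for X
    using subspace_0[OF sub[OF that]] zero_in_Rad[of X] unfolding incident_below_def by blast
  have below_UNIV: "incident_below s X UNIV" if "X \<in> F" for X
    using obj[OF that] unfolding gobj_def incident_below_def by blast
  fix X Y assume XY: "X \<in> G" "Y \<in> G"
  then consider "X = Y" | "X = {0}" | "Y = {0}" | "X = UNIV" "Y \<in> F" | "Y = UNIV" "X \<in> F"
    | "X \<in> F" "Y \<in> F"
    unfolding G_def by blast
  then show "incident s X Y"
  proof cases
    case 6
    then show ?thesis using inc by blast
  qed (use XY zero_below below_UNIV in \<open>auto simp: incident_iff\<close>)
qed

lemma flag_extension:
  assumes rad_V: "dim (Rad s UNIV) \<le> 1" and F: "is_flag scale s F"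
    and i: "i \<in> types scale" "i \<notin> gtype scale ` F"
  obtains C where "gobj scale s C" "gtype scale C = i" "\<And>X. X \<in> F \<Longrightarrow> incident s X C"
proof -
  define G where "G = insert {0} (insert UNIV F)"
  note G = flag_with_zero_and_UNIV[OF rad_V F, folded G_def]
  have "0 < i" "i < dim UNIV" using i(1) unfolding types_def by auto
  then have "{0} \<in> G" "dim {0::'v} < i" "UNIV \<in> G" "i < dim UNIV" unfolding G_def by auto
  obtain A where A: "A \<in> G" "dim A < i"
    and below_A: "\<And>X. X \<in> G \<Longrightarrow> dim X < i \<Longrightarrow> X = A \<or> incident_below s X A"
    using incident_family_greatest_below[OF G(1,3) \<open>{0} \<in> G\<close> \<open>dim {0} < i\<close>] by blast
  obtain B where B: "B \<in> G" "i < dim B"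
    and above_B: "\<And>X. X \<in> G \<Longrightarrow> i < dim X \<Longrightarrow> B = X \<or> incident_below s B X"
    using incident_family_least_above[OF G(1,3) \<open>UNIV \<in> G\<close> \<open>i < dim UNIV\<close>] by blast
  have "incident_below s A B"
    using incident_below_of_incident[OF G(1)[OF A(1)] G(1)[OF B(1)] G(3)[OF A(1) B(1)]] A(2) B(2)
    by fastforce
  then obtain C where C: "subspace C" "dim C = i" "incident_below s A C" "incident_below s C B"
    "dim (Rad s C) \<le> 1"
    using exists_incident_between[OF G(1)[OF A(1)] G(1)[OF B(1)] _ G(2)[OF A(1)] G(2)[OF B(1)]]
      A(2) B(2) by blast
  show thesis
  proof (rule that)
    have "C \<inter> Rad s UNIV = {0}" using incident_below_Int_Rad_UNIV[OF C(1,4)] .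
    then show "gobj scale s C" unfolding gobj_def using C(1,2,5) i(1) by simp
    show "gtype scale C = i" unfolding gtype_def using C(2) .
  next
    fix X assume "X \<in> F"
    then have X: "X \<in> G" "dim X \<noteq> i" using i(2) unfolding G_def gtype_def by auto
    show "incident s X C"
    proof (cases "dim X < i")
      case True
      then have "X = A \<or> incident_below s X A" using below_A X(1) by blast
      then have "incident_below s X C"
        using incident_below_trans[OF G(1)[OF X(1)] _ C(3)] C(3) by blast
      then show ?thesis unfolding incident_iff by blast
    next
      case False
      then have "B = X \<or> incident_below s B X" using above_B X by simp
      then have "incident_below s C X" using incident_below_trans[OF C(1) C(4)] C(4) by blast
      then show ?thesis unfolding incident_iff by blast
    qed
  qed
qed

lemma flag_extends_to_types:
  assumes "dim (Rad s UNIV) \<le> 1" "is_flag scale s F" "finite T" "T \<subseteq> types scale"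
  shows "\<exists>F'. is_flag scale s F' \<and> F \<subseteq> F' \<and> T \<subseteq> gtype scale ` F'"
  using assms(3,4)
proof (induction T rule: finite_induct)
  case empty
  then show ?case using assms(2) by blast
next
  case (insert i T)
  then obtain F' where F': "is_flag scale s F'" "F \<subseteq> F'" "T \<subseteq> gtype scale ` F'" by auto
  show ?case
  proof (cases "i \<in> gtype scale ` F'")
    case True
    then show ?thesis using F' by blast
  next
    case False
    obtain C where C: "gobj scale s C" "gtype scale C = i" "\<And>X. X \<in> F' \<Longrightarrow> incident s X C"
      using flag_extension[OF assms(1) F'(1) _ False] insert.prems by blast
    have "is_flag scale s (insert C F')"
      using F'(1) C(1,3) unfolding is_flag_def incident_def by blast
    then show ?thesis using F'(2,3) C(2) by blast
  qed
qed

lemma transversal_if_dim_Rad_le_1: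
  assumes "dim (Rad s UNIV) \<le> 1"
  shows "transversal scale s"
  unfolding transversal_def
proof (intro allI impI)
  fix F assume "is_flag scale s F"
  then obtain F' where "is_flag scale s F'" "F \<subseteq> F'" "types scale \<subseteq> gtype scale ` F'"
    using flag_extends_to_types[OF assms, of F "types scale"] unfolding types_def by auto
  then show "\<exists>C. is_chamber scale s C \<and> F \<subseteq> C" unfolding is_chamber_def by blast
qed

lemma string_diagram: "string_diagram scale s"
  unfolding string_diagram_def
proof (intro allI impI, elim conjE)
  fix X Y Z
  assume objs: "gobj scale s X" "gobj scale s Y" "gobj scale s Z"
    and dims: "gtype scale X < gtype scale Y" "gtype scale Y < gtype scale Z"
    and inc: "incident s X Y" "incident s Z Y"
  have sub: "subspace X" "subspace Y" "subspace Z" using objs unfolding gobj_def by auto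
  have "incident_below s X Y"
    using incident_below_of_incident[OF sub(1,2) inc(1)] dims(1) unfolding gtype_def by fastforce
  moreover have "incident_below s Y Z"
    using incident_below_of_incident[OF sub(2,3)] inc(2) dims(2)
    unfolding gtype_def by (fastforce simp: incident_iff)
  ultimately have "incident_below s X Z" by (rule incident_below_trans[OF sub(1)])
  then show "incident s X Z" unfolding incident_iff by blast
qed

end

theorem lemma3p2:
  fixes scale :: "'a::field \<Rightarrow> 'v::ab_group_add \<Rightarrow> 'v"
    and Basis :: "'v set"
    and s :: "'v \<Rightarrow> 'v \<Rightarrow> 'a"
    and n :: nat
  assumes "finite_dimensional_vector_space scale Basis"
    and "Vector_Spaces.vector_space.dim scale (UNIV :: 'v set) = n"
    and "alt_bilinear scale s"
    and "Vector_Spaces.vector_space.dim scale (Rad s UNIV) \<le> 1"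
  shows "transversal scale s \<and> string_diagram scale s"
proof -
  interpret bilinear_form_space scale Basis s
    by (rule bilinear_form_space.intro[OF assms(1) bilinear_form_space_axioms.intro[OF assms(3)]])
  show ?thesis using transversal_if_dim_Rad_le_1[OF assms(4)] string_diagram by blast
qed

end
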